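(* Let $g,h\in K\{\{x,y\}$ with $\mathrm{ord}_x(g)\ge1$. Then there is a unique $K$-algebra homomorphism $\varphi=\varphi_{(g,h)}:K\{\{x,y\}\to K\{\{x,y\}$ (i.e. a $K$-linear map with $\varphi(1_P)=1_P$ and $\varphi(f_1\cdot\ldots\cdot f_m)=\varphi(f_1)\cdot\ldots\cdot\varphi(f_m)$ for all $m\ge2$) such that $\varphi(x)=g$, $\varphi(y)=h$, and $\varphi$ is continuous with respect to the $x$-adic topology.
   Context: Let $K$ be a field and let $x\neq y$ be two symbols (variables). A finite planar reduced rooted tree is a finite rooted tree in which the children of each vertex are linearly ordered and no vertex has exactly one child; its leaves are the vertices without children (the one-vertex tree has its root as its unique leaf). $P(x,y)$ denotes the set of isomorphism classes of pairs $S=(T,\lambda)$ with $T$ a finite planar reduced rooted tree and $\lambda:L(T)\to\{x,y\}$ a labeling of its set of leaves $L(T)$; $\deg_x(S)=\#\lambda^{-1}(x)$, $\deg_y(S)=\#\lambda^{-1}(y)$, $\deg(S)=\#L(T)$. Let $P'(x,y)=P(x,y)\cup\{1_P\}$, where $1_P$ represents the empty tree (with $\deg_x(1_P)=\deg_y(1_P)=0$). For $m\ge 2$ and $S_1,\dots,S_m\in P(x,y)$, the $m$-ary grafting $\bullet_m(S_1,\dots,S_m)$ is the labeled tree obtained by adding a new root whose ordered children are the roots of $S_1,\dots,S_m$ (in this order), with the labelings inherited. It is extended to $P'(x,y)$ by deleting occurrences of $1_P$: $\bullet_m(S_1,\dots,S_m)=\bullet_{r}(S_{j_1},\dots,S_{j_r})$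 where $S_{j_1},\dots,S_{j_r}$ are the entries different from $1_P$ (in order), with the conventions $\bullet_1(S)=S$ and $\bullet_0()=1_P$. $K\{\{x,y\}$ is the $K$-vector space of all functions $f:P'(x,y)\to K$, $S\mapsto c_S(f)$, such that for every $n\in\mathbb N$ the set $\{S: c_S(f)\ne0,\ \deg_x(S)=n\}$ is finite; one writes $f=\sum_S c_S(f)S$ and identifies $S\in P'(x,y)$ with its indicator function (so $x$ and $y$ denote the one-vertex trees labeled $x$, resp. $y$). For $m\ge2$, the product $\bullet_m(f_1,\dots,f_m)=f_1\cdot\ldots\cdot f_m$ is defined by $c_S(f_1\cdot\ldots\cdot f_m)=\sum c_{S_1}(f_1)\cdots c_{S_m}(f_m)$, summed over all $(S_1,\dots,S_m)\in P'(x,y)^m$ with $\bullet_m(S_1,\dots,S_m)=S$. For $f\ne0$, $\mathrm{ord}_x(f)=\min\{\deg_x(S): c_S(f)\neq 0\}$, and $\mathrm{ord}_x(0)=\infty$; $|f|_x=(1/2)^{\mathrm{ord}_x(f)}$ (with $|0|_x=0$), and the $x$-adic distance/topology is given by $|f-g|_x$. *)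

theory Defs
  imports Main "HOL-Library.Extended_Nat"
begin

datatype lab = LX | LY

text \<open>Planar rooted trees with labelled leaves; the children of a node are ordered (a list).
  Isomorphism classes of planar labelled trees correspond exactly to these terms.\<close>
datatype ptree = Leaf lab | Node "ptree list"

fun reduced :: "ptree \<Rightarrow> bool" where
  "reduced (Leaf l) = True"
| "reduced (Node ts) = (2 \<le> length ts \<and> (\<forall>t\<in>set ts. reduced t))"

text \<open>Elements of P'(x,y): None is the empty tree 1_P, Some t a reduced tree.\<close>
definition validP :: "ptree option \<Rightarrow> bool" where
  "validP S = (case S of None \<Rightarrow> True | Some t \<Rightarrow> reduced t)"

fun degx_t :: "ptree \<Rightarrow> nat" where
  "degx_t (Leaf l) = (if l = LX then 1 else 0)"
| "degx_t (Node ts) = sum_list (map degx_t ts)"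

definition degx :: "ptree option \<Rightarrow> nat" where
  "degx S = (case S of None \<Rightarrow> 0 | Some t \<Rightarrow> degx_t t)"

text \<open>Grafting extended to P'(x,y): delete occurrences of 1_P, with bullet_1(S) = S,
  bullet_0() = 1_P.\<close>
definition graft :: "ptree option list \<Rightarrow> ptree option" where
  "graft Ss = (let ts = map the (filter (\<lambda>S. S \<noteq> None) Ss) in
     (case ts of [] \<Rightarrow> None | [t] \<Rightarrow> Some t | _ \<Rightarrow> Some (Node ts)))"

definition KXY :: "(ptree option \<Rightarrow> 'a::field) set" where
  "KXY = {f. (\<forall>S. \<not> validP S \<longrightarrow> f S = 0) \<and>
             (\<forall>n. finite {S. validP S \<and> f S \<noteq> 0 \<and> degx S = n})}"

definition ind :: "ptree option \<Rightarrow> ptree option \<Rightarrow> 'a::field" where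
  "ind T = (\<lambda>S. if S = T then 1 else 0)"

definition oneP :: "ptree option \<Rightarrow> 'a::field" where
  "oneP = ind None"

definition varx :: "ptree option \<Rightarrow> 'a::field" where
  "varx = ind (Some (Leaf LX))"

definition vary :: "ptree option \<Rightarrow> 'a::field" where
  "vary = ind (Some (Leaf LY))"

definition mprod :: "(ptree option \<Rightarrow> 'a::field) list \<Rightarrow> ptree option \<Rightarrow> 'a" where
  "mprod fs S = (\<Sum>Ss\<in>{Ss. length Ss = length fs \<and> (\<forall>T\<in>set Ss. validP T) \<and> graft Ss = S}.
                    \<Prod>i<length fs. (fs ! i) (Ss ! i))"

definition ordx :: "(ptree option \<Rightarrow> 'a::field) \<Rightarrow> enat" where
  "ordx f = (if f = (\<lambda>_. 0) then \<infinity>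
             else enat (LEAST n. \<exists>S. validP S \<and> f S \<noteq> 0 \<and> degx S = n))"

definition absx :: "(ptree option \<Rightarrow> 'a::field) \<Rightarrow> real" where
  "absx f = (if f = (\<lambda>_. 0) then 0 else (1/2) ^ (the_enat (ordx f)))"

definition alg_hom :: "((ptree option \<Rightarrow> 'a::field) \<Rightarrow> (ptree option \<Rightarrow> 'a)) \<Rightarrow> bool" where
  "alg_hom \<phi> = ((\<forall>f\<in>KXY. \<phi> f \<in> KXY) \<and>
     (\<forall>f\<in>KXY. \<forall>g\<in>KXY. \<forall>a b. \<phi> (\<lambda>S. a * f S + b * g S) = (\<lambda>S. a * \<phi> f S + b * \<phi> g S)) \<and>
     \<phi> oneP = oneP \<and>
     (\<forall>fs. 2 \<le> length fs \<longrightarrow> set fs \<subseteq> KXY \<longrightarrow> \<phi> (mprod fs) = mprod (map \<phi> fs)))"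

definition xadic_continuous :: "((ptree option \<Rightarrow> 'a::field) \<Rightarrow> (ptree option \<Rightarrow> 'a)) \<Rightarrow> bool" where
  "xadic_continuous \<phi> = (\<forall>f\<in>KXY. \<forall>e>0. \<exists>d>0. \<forall>g\<in>KXY.
       absx (\<lambda>S. g S - f S) < d \<longrightarrow> absx (\<lambda>S. \<phi> g S - \<phi> f S) < e)"

end

theory Submission
  imports Defs "HOL-Library.FuncSet"
begin

text \<open>
  The homomorphism is forced on the basis: a tree \<^term>\<open>S\<close> must be sent to the product, along its
  grafting structure, of the images \<^term>\<open>g\<close> and \<^term>\<open>h\<close> of its leaves, and the empty tree to
  \<^term>\<open>oneP\<close>. Since \<open>ord\<^sub>x g \<ge> 1\<close>, the image of \<^term>\<open>S\<close> has no terms of x-degree below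
  \<^term>\<open>degx S\<close>, so \<open>\<phi>(f) = \<Sum>\<^sub>S c\<^sub>S(f) \<phi>(S)\<close> is a finite sum in each coefficient: the
  coefficient at \<^term>\<open>T\<close> only involves the \<^term>\<open>S\<close> with \<^term>\<open>degx S \<le> degx T\<close>. Hence \<open>\<phi>\<close>
  is linear and preserves agreement up to any x-degree, that is, it is x-adically continuous. It is
  multiplicative on finitely supported series by multilinear expansion of the product, and in
  general because coefficients up to degree \<open>n\<close> only depend on the truncations at degree \<open>n\<close>.
  Any continuous homomorphism with the same values on \<^term>\<open>varx\<close> and \<^term>\<open>vary\<close> agrees with
  \<open>\<phi>\<close> on trees, hence on finitely supported series, and these are dense.
\<close>

section \<open>Grafting\<close>

definition graft_preimage :: "nat \<Rightarrow> ptree option \<Rightarrow> ptree option list set" where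
  "graft_preimage m T = {Ss. length Ss = m \<and> (\<forall>S\<in>set Ss. validP S) \<and> graft Ss = T}"

lemma graft_map_filter:
  "graft Ss = (case List.map_filter id Ss of [] \<Rightarrow> None | [t] \<Rightarrow> Some t
                 | ts \<Rightarrow> Some (Node ts))"
  by (simp add: graft_def map_filter_def split: list.split)

lemma set_map_filter_id: "t \<in> set (List.map_filter id Ss) \<longleftrightarrow> Some t \<in> set Ss"
  by (induction Ss) (auto split: option.split)

lemma graft_append_None: "graft (as @ None # bs) = graft (as @ bs)"
  by (simp add: graft_def)

lemma validP_graft:
  assumes "\<forall>S\<in>set Ss. validP S" shows "validP (graft Ss)"
proof -
  have "\<forall>t\<in>set (List.map_filter id Ss). reduced t"
    using assms by (force simp: validP_def set_map_filter_id)
  then show ?thesis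
    unfolding graft_map_filter by (auto simp: validP_def split: list.split)
qed

lemma degx_None [simp]: "degx None = 0"
  and degx_Some [simp]: "degx (Some t) = degx_t t"
  by (simp_all add: degx_def)

lemma degx_graft: "degx (graft Ss) = sum_list (map degx Ss)"
proof -
  have "sum_list (map degx Ss) = sum_list (map degx_t (List.map_filter id Ss))"
    by (induction Ss) (auto split: option.split)
  then show ?thesis
    unfolding graft_map_filter by (auto split: list.split)
qed

lemma degx_le_degx_graft: "S \<in> set Ss \<Longrightarrow> degx S \<le> degx (graft Ss)"
  by (simp add: degx_graft member_le_sum_list)

lemma validP_if_graft_preimage: "Ss \<in> graft_preimage m T \<Longrightarrow> validP T"
  unfolding graft_preimage_def using validP_graft by auto

lemma Some_mem_imp_graft:
  assumes "Some t \<in> set Ss"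
  shows "graft Ss = Some t \<or> (\<exists>ts. graft Ss = Some (Node ts) \<and> t \<in> set ts)"
proof -
  have t: "t \<in> set (List.map_filter id Ss)" using assms by (simp add: set_map_filter_id)
  show ?thesis
  proof (cases "List.map_filter id Ss" rule: remdups_adj.cases)
    case (3 t1 t2 ts)
    then have "graft Ss = Some (Node (t1 # t2 # ts))" by (simp add: graft_map_filter)
    with t 3 show ?thesis by metis
  qed (use t in \<open>auto simp: graft_map_filter\<close>)
qed

lemma finite_graft_preimage: "finite (graft_preimage m T)"
proof -
  define C where "C = {None, T} \<union> (case T of Some (Node ts) \<Rightarrow> Some ` set ts | _ \<Rightarrow> {})"
  have "S \<in> C" if S: "S \<in> set Ss" and gr: "graft Ss = T" for S Ss
  proof (cases S)
    case (Some t)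
    then consider "T = Some t" | ts where "T = Some (Node ts)" "t \<in> set ts"
      using S gr Some_mem_imp_graft[of t Ss] Some by auto
    then show ?thesis by cases (auto simp: C_def Some)
  qed (simp add: C_def)
  then have "graft_preimage m T \<subseteq> {Ss. set Ss \<subseteq> C \<and> length Ss = m}"
    unfolding graft_preimage_def by blast
  moreover have "finite C" unfolding C_def by (auto split: option.split ptree.split)
  ultimately show ?thesis using finite_lists_length_eq finite_subset by blast
qed

lemma bij_betw_insert_None:
  assumes "k \<le> m"
  shows "bij_betw (\<lambda>Ss. take k Ss @ None # drop k Ss)
           (graft_preimage m T) {Us \<in> graft_preimage (Suc m) T. Us ! k = None}"
  unfolding bij_betw_def
proof
  show "inj_on (\<lambda>Ss. take k Ss @ None # drop k Ss) (graft_preimage m T)"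
  proof (rule inj_onI)
    fix Ss Ss' assume "Ss \<in> graft_preimage m T" "Ss' \<in> graft_preimage m T"
      and eq: "take k Ss @ None # drop k Ss = take k Ss' @ None # drop k Ss'"
    then have "length Ss = m" "length Ss' = m" by (simp_all add: graft_preimage_def)
    with eq assms have "take k Ss = take k Ss' \<and> drop k Ss = drop k Ss'"
      by (simp add: append_eq_append_conv)
    then show "Ss = Ss'" by (metis append_take_drop_id)
  qed
  show "(\<lambda>Ss. take k Ss @ None # drop k Ss) ` graft_preimage m T
          = {Us \<in> graft_preimage (Suc m) T. Us ! k = None}"
  proof (intro equalityI subsetI)
    fix Us assume "Us \<in> (\<lambda>Ss. take k Ss @ None # drop k Ss) ` graft_preimage m T"
    then obtain Ss where Ss: "Ss \<in> graft_preimage m T" "Us = take k Ss @ None # drop k Ss"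
      by blast
    then show "Us \<in> {Us \<in> graft_preimage (Suc m) T. Us ! k = None}"
      using assms graft_append_None[of "take k Ss" "drop k Ss"]
      by (auto simp: graft_preimage_def validP_def nth_append dest: in_set_takeD in_set_dropD)
  next
    fix Us assume Us: "Us \<in> {Us \<in> graft_preimage (Suc m) T. Us ! k = None}"
    then have len: "length Us = Suc m" by (simp add: graft_preimage_def)
    define Ss where "Ss = take k Us @ drop (Suc k) Us"
    have Us_split: "Us = take k Us @ None # drop (Suc k) Us"
      using Us len assms by (metis (mono_tags, lifting) id_take_nth_drop le_imp_less_Suc mem_Collect_eq)
    have "Us = take k Ss @ None # drop k Ss"
      using Us_split len assms by (simp add: Ss_def min_def)
    moreover have "Ss \<in> graft_preimage m T"
      using Us len Us_split assms graft_append_None[of "take k Us" "drop (Suc k) Us"]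
      by (auto simp: Ss_def graft_preimage_def dest: in_set_takeD in_set_dropD)
    ultimately show "Us \<in> (\<lambda>Ss. take k Ss @ None # drop k Ss) ` graft_preimage m T"
      by blast
  qed
qed

section \<open>Products\<close>

lemma mprod_eq_sum_graft_preimage:
  "mprod fs T = (\<Sum>Ss\<in>graft_preimage (length fs) T. \<Prod>i<length fs. (fs ! i) (Ss ! i))"
  unfolding mprod_def graft_preimage_def by simp

text \<open>The summand of \<^const>\<open>mprod\<close> as a list product, so that it splits along \<^term>\<open>(@)\<close>.\<close>

definition coeff_prod :: "(ptree option \<Rightarrow> 'a::comm_monoid_mult) list \<Rightarrow> ptree option list \<Rightarrow> 'a" where
  "coeff_prod fs Ss = prod_list (map2 (\<lambda>f S. f S) fs Ss)"

lemma coeff_prod_Cons [simp]: "coeff_prod (f # fs) (S # Ss) = f S * coeff_prod fs Ss"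
  by (simp add: coeff_prod_def)

lemma coeff_prod_append:
  "length fs = length Ss \<Longrightarrow> coeff_prod (fs @ gs) (Ss @ Us) = coeff_prod fs Ss * coeff_prod gs Us"
  by (simp add: coeff_prod_def zip_append)

lemma coeff_prod_append_Cons:
  assumes "length Us = Suc (length fs + length gs)"
  shows "coeff_prod (fs @ f # gs) Us
           = coeff_prod fs (take (length fs) Us) * (f (Us ! length fs) * coeff_prod gs (drop (Suc (length fs)) Us))"
proof -
  have "Us = take (length fs) Us @ Us ! length fs # drop (Suc (length fs)) Us"
    using assms by (simp add: id_take_nth_drop)
  then have "coeff_prod (fs @ f # gs) Us
               = coeff_prod (fs @ f # gs) (take (length fs) Us @ Us ! length fs # drop (Suc (length fs)) Us)"
    by simp
  then show ?thesis using assms by (simp add: coeff_prod_append)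
qed

lemma prod_nth_eq_coeff_prod:
  "length fs = length Ss \<Longrightarrow> (\<Prod>i<length fs. (fs ! i) (Ss ! i)) = coeff_prod fs Ss"
proof (induction fs Ss rule: list_induct2)
  case (Cons f fs S Ss)
  then show ?case by (simp add: prod.lessThan_Suc_shift del: prod.lessThan_Suc)
qed (simp add: coeff_prod_def)

lemma mprod_eq_sum_coeff_prod:
  "mprod fs T = (\<Sum>Ss\<in>graft_preimage (length fs) T. coeff_prod fs Ss)"
  unfolding mprod_eq_sum_graft_preimage
  by (rule sum.cong) (auto simp: graft_preimage_def prod_nth_eq_coeff_prod)

lemma oneP_apply: "oneP S = (if S = None then 1 else 0)"
  by (simp add: oneP_def ind_def)

lemma mprod_append_oneP_Cons: "mprod (fs @ oneP # gs) = mprod (fs @ gs)"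
proof
  fix T
  let ?k = "length fs" and ?m = "length fs + length gs"
  have "mprod (fs @ oneP # gs) T
          = (\<Sum>Us\<in>graft_preimage (Suc ?m) T. coeff_prod (fs @ oneP # gs) Us)"
    by (simp add: mprod_eq_sum_coeff_prod)
  also have "\<dots> = (\<Sum>Us\<in>{Us \<in> graft_preimage (Suc ?m) T. Us ! ?k = None}.
                       coeff_prod (fs @ oneP # gs) Us)"
    by (intro sum.mono_neutral_right finite_graft_preimage)
      (auto simp: coeff_prod_append_Cons oneP_apply graft_preimage_def)
  also have "\<dots> = (\<Sum>Ss\<in>graft_preimage ?m T. coeff_prod (fs @ oneP # gs) (take ?k Ss @ None # drop ?k Ss))"
    by (rule sum.reindex_bij_betw[symmetric], rule bij_betw_insert_None) simp
  also have "\<dots> = (\<Sum>Ss\<in>graft_preimage ?m T. coeff_prod (fs @ gs) Ss)"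
  proof (rule sum.cong[OF refl])
    fix Ss assume "Ss \<in> graft_preimage ?m T"
    then have len: "length Ss = ?m" by (simp add: graft_preimage_def)
    then have "coeff_prod (fs @ oneP # gs) (take ?k Ss @ None # drop ?k Ss)
                 = coeff_prod fs (take ?k Ss) * coeff_prod gs (drop ?k Ss)"
      by (simp add: coeff_prod_append oneP_apply)
    also have "\<dots> = coeff_prod (fs @ gs) (take ?k Ss @ drop ?k Ss)"
      using len by (subst coeff_prod_append) simp_all
    finally show "coeff_prod (fs @ oneP # gs) (take ?k Ss @ None # drop ?k Ss) = coeff_prod (fs @ gs) Ss"
      by simp
  qed
  also have "\<dots> = mprod (fs @ gs) T"
    by (simp add: mprod_eq_sum_coeff_prod)
  finally show "mprod (fs @ oneP # gs) T = mprod (fs @ gs) T" .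
qed

lemma mprod_Nil: "mprod [] = oneP"
proof
  fix T
  have "graft_preimage 0 T = (if T = None then {[]} else {})"
    by (auto simp: graft_preimage_def graft_def)
  then show "mprod [] T = oneP T" by (simp add: mprod_eq_sum_coeff_prod oneP_apply coeff_prod_def)
qed

lemma mprod_singleton:
  assumes "\<And>S. \<not> validP S \<Longrightarrow> f S = 0" shows "mprod [f] = f"
proof
  fix T
  have "graft [S] = S" for S by (cases S) (auto simp: graft_def)
  then have "graft_preimage 1 T = (if validP T then {[T]} else {})"
    by (auto simp: graft_preimage_def length_Suc_conv)
  then show "mprod [f] T = f T" using assms by (simp add: mprod_eq_sum_coeff_prod coeff_prod_def)
qed

lemma coeff_prod_map_ind:
  "length Us = length Ss \<Longrightarrow> coeff_prod (map ind Ss) Us = (if Us = Ss then 1 else 0)"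
  by (induction Us Ss rule: list_induct2) (auto simp: coeff_prod_def ind_def)

lemma mprod_map_ind:
  assumes "\<forall>S\<in>set Ss. validP S" shows "mprod (map ind Ss) = ind (graft Ss)"
proof
  fix T
  have "mprod (map ind Ss) T = (\<Sum>Us\<in>graft_preimage (length Ss) T. if Us = Ss then 1 else 0)"
    unfolding mprod_eq_sum_coeff_prod
    by (rule sum.cong) (auto simp: graft_preimage_def coeff_prod_map_ind)
  also have "\<dots> = ind (graft Ss) T"
    using assms finite_graft_preimage by (simp add: ind_def graft_preimage_def)
  finally show "mprod (map ind Ss) T = ind (graft Ss) T" .
qed

lemma mprod_sum_expand:
  assumes "\<And>i. i < m \<Longrightarrow> finite (A i)"
  shows "mprod (map (\<lambda>i U. \<Sum>a\<in>A i. c i a * F i a U) [0..<m]) T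
           = (\<Sum>\<sigma>\<in>PiE {..<m} A. (\<Prod>i<m. c i (\<sigma> i)) * mprod (map (\<lambda>i. F i (\<sigma> i)) [0..<m]) T)"
proof -
  have "mprod (map (\<lambda>i U. \<Sum>a\<in>A i. c i a * F i a U) [0..<m]) T
          = (\<Sum>Ss\<in>graft_preimage m T. \<Prod>i<m. \<Sum>a\<in>A i. c i a * F i a (Ss ! i))"
    unfolding mprod_eq_sum_graft_preimage by (intro sum.cong prod.cong) auto
  also have "\<dots> = (\<Sum>Ss\<in>graft_preimage m T. \<Sum>\<sigma>\<in>PiE {..<m} A.
                       (\<Prod>i<m. c i (\<sigma> i)) * (\<Prod>i<m. F i (\<sigma> i) (Ss ! i)))"
    by (intro sum.cong refl, subst prod_sum_PiE) (use assms in \<open>auto simp: prod.distrib\<close>)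
  also have "\<dots> = (\<Sum>\<sigma>\<in>PiE {..<m} A. (\<Prod>i<m. c i (\<sigma> i)) *
                       (\<Sum>Ss\<in>graft_preimage m T. \<Prod>i<m. F i (\<sigma> i) (Ss ! i)))"
    by (subst sum.swap) (simp add: sum_distrib_left)
  also have "\<dots> = (\<Sum>\<sigma>\<in>PiE {..<m} A. (\<Prod>i<m. c i (\<sigma> i)) * mprod (map (\<lambda>i. F i (\<sigma> i)) [0..<m]) T)"
    unfolding mprod_eq_sum_graft_preimage by (intro sum.cong prod.cong arg_cong2[where f = "(*)"]) auto
  finally show ?thesis .
qed

lemma mprod_nonzero_imp:
  assumes "mprod fs T \<noteq> 0"
  obtains Ss where "Ss \<in> graft_preimage (length fs) T" "\<And>i. i < length fs \<Longrightarrow> (fs ! i) (Ss ! i) \<noteq> 0"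
proof -
  obtain Ss where "Ss \<in> graft_preimage (length fs) T" "(\<Prod>i<length fs. (fs ! i) (Ss ! i)) \<noteq> 0"
    using assms unfolding mprod_eq_sum_graft_preimage by (rule sum.not_neutral_contains_not_neutral)
  then show thesis using that by auto
qed

section \<open>Series and linear maps\<close>

lemma KXY_vanishes: "f \<in> KXY \<Longrightarrow> \<not> validP S \<Longrightarrow> f S = 0"
  by (simp add: KXY_def)

lemma validP_if_KXY_ne: "f \<in> KXY \<Longrightarrow> g \<in> KXY \<Longrightarrow> f S \<noteq> g S \<Longrightarrow> validP S"
  by (metis KXY_vanishes)

lemma finite_support_degx_le:
  assumes "f \<in> KXY" shows "finite {S. f S \<noteq> 0 \<and> degx S \<le> n}"
proof -
  have "{S. f S \<noteq> 0 \<and> degx S \<le> n} = (\<Union>k\<le>n. {S. validP S \<and> f S \<noteq> 0 \<and> degx S = k})"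
    using assms KXY_vanishes by fastforce
  then show ?thesis using assms by (simp add: KXY_def)
qed

lemma KXY_if_finite_support:
  assumes "\<And>S. \<not> validP S \<Longrightarrow> f S = 0" and "finite {S. f S \<noteq> 0}"
  shows "f \<in> KXY"
  unfolding KXY_def using assms by (auto elim: rev_finite_subset)

lemma ind_KXY: "validP S \<Longrightarrow> ind S \<in> KXY"
  by (rule KXY_if_finite_support) (auto simp: ind_def)

lemma oneP_KXY: "oneP \<in> KXY"
  unfolding oneP_def by (rule ind_KXY) (simp add: validP_def)

lemma mprod_KXY:
  assumes "set fs \<subseteq> KXY" shows "mprod fs \<in> KXY"
  unfolding KXY_def
proof (intro CollectI conjI allI impI)
  show "mprod fs T = 0" if "\<not> validP T" for T
    using that validP_if_graft_preimage by (auto simp: mprod_eq_sum_graft_preimage intro!: sum.neutral)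
  fix n
  let ?U = "\<Union>f\<in>set fs. {S. f S \<noteq> 0 \<and> degx S \<le> n}"
  have "{T. validP T \<and> mprod fs T \<noteq> 0 \<and> degx T = n} \<subseteq> graft ` {Ss. set Ss \<subseteq> ?U \<and> length Ss = length fs}"
  proof
    fix T assume T: "T \<in> {T. validP T \<and> mprod fs T \<noteq> 0 \<and> degx T = n}"
    then obtain Ss where Ss: "Ss \<in> graft_preimage (length fs) T"
      and nz: "\<And>i. i < length fs \<Longrightarrow> (fs ! i) (Ss ! i) \<noteq> 0"
      using mprod_nonzero_imp by blast
    have "Ss ! i \<in> ?U" if "i < length fs" for i
      using that nz Ss T degx_le_degx_graft[of "Ss ! i" Ss] by (force simp: graft_preimage_def)
    then have "set Ss \<subseteq> ?U" using Ss by (auto simp: graft_preimage_def in_set_conv_nth)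
    then show "T \<in> graft ` {Ss. set Ss \<subseteq> ?U \<and> length Ss = length fs}"
      using Ss by (auto simp: graft_preimage_def)
  qed
  moreover have "finite (graft ` {Ss. set Ss \<subseteq> ?U \<and> length Ss = length fs})"
    using assms finite_support_degx_le by (auto intro!: finite_imageI finite_lists_length_eq)
  ultimately show "finite {T. validP T \<and> mprod fs T \<noteq> 0 \<and> degx T = n}"
    by (rule finite_subset)
qed

lemma sum_ind_KXY:
  assumes "finite X" "\<forall>x\<in>X. validP (s x)"
  shows "(\<lambda>U. \<Sum>x\<in>X. c x * ind (s x) U) \<in> KXY"
proof (rule KXY_if_finite_support)
  show "(\<Sum>x\<in>X. c x * ind (s x) S) = 0" if "\<not> validP S" for S
    using that assms(2) by (auto simp: ind_def intro!: sum.neutral)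
  have "{U. (\<Sum>x\<in>X. c x * ind (s x) U) \<noteq> 0} \<subseteq> s ` X"
    by (auto simp: ind_def elim!: sum.not_neutral_contains_not_neutral split: if_splits)
  then show "finite {U. (\<Sum>x\<in>X. c x * ind (s x) U) \<noteq> 0}"
    using assms(1) by (rule finite_subset[OF _ finite_imageI])
qed

lemma sum_ind_expansion:
  assumes "finite A" "{S. f S \<noteq> 0} \<subseteq> A"
  shows "(\<lambda>U. \<Sum>a\<in>A. f a * ind a U) = f"
proof
  fix U
  have "(\<Sum>a\<in>A. f a * ind a U) = (\<Sum>a\<in>A. if a = U then f U else 0)"
    by (intro sum.cong) (auto simp: ind_def)
  also have "\<dots> = f U" using assms by auto
  finally show "(\<Sum>a\<in>A. f a * ind a U) = f U" .
qed

definition KXY_linear :: "((ptree option \<Rightarrow> 'a::field) \<Rightarrow> ptree option \<Rightarrow> 'a) \<Rightarrow> bool" where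
  "KXY_linear L \<longleftrightarrow>
     (\<forall>f\<in>KXY. \<forall>g\<in>KXY. \<forall>a b. L (\<lambda>S. a * f S + b * g S) = (\<lambda>S. a * L f S + b * L g S))"

lemma KXY_linear_if_alg_hom: "alg_hom \<phi> \<Longrightarrow> KXY_linear \<phi>"
  by (simp add: alg_hom_def KXY_linear_def)

lemma KXY_linear_sum_ind:
  assumes L: "KXY_linear L" and "finite X" "\<forall>x\<in>X. validP (s x)"
  shows "L (\<lambda>U. \<Sum>x\<in>X. c x * ind (s x) U) = (\<lambda>T. \<Sum>x\<in>X. c x * L (ind (s x)) T)"
  using assms(2,3)
proof (induction X rule: finite_induct)
  case empty
  have "L (\<lambda>S. 0 * oneP S + 0 * oneP S) = (\<lambda>S. 0 * L oneP S + 0 * L oneP S)"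
    using L oneP_KXY unfolding KXY_linear_def by blast
  then show ?case by simp
next
  case (insert x X)
  have "\<And>f g a b. f \<in> KXY \<Longrightarrow> g \<in> KXY \<Longrightarrow> L (\<lambda>S. a * f S + b * g S) = (\<lambda>S. a * L f S + b * L g S)"
    using L unfolding KXY_linear_def by blast
  from this[OF ind_KXY sum_ind_KXY, of "s x" X s "c x" 1 c] show ?case
    using insert by simp
qed

lemma PiE_support_validP:
  assumes "set fs \<subseteq> KXY" and \<sigma>: "\<sigma> \<in> PiE {..<length fs} (\<lambda>i. {S. (fs ! i) S \<noteq> 0})"
  shows "\<forall>S\<in>set (map \<sigma> [0..<length fs]). validP S"
proof
  fix S assume "S \<in> set (map \<sigma> [0..<length fs])"
  then obtain i where i: "i < length fs" "S = \<sigma> i" by auto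
  then have "(fs ! i) S \<noteq> 0" using PiE_mem[OF \<sigma>, of i] by simp
  moreover have "fs ! i \<in> KXY" using i assms(1) by auto
  ultimately show "validP S" using KXY_vanishes by blast
qed

lemma mprod_expand_finite_support:
  assumes "set fs \<subseteq> KXY" and fin: "\<forall>f\<in>set fs. finite {S. f S \<noteq> 0}"
  shows "mprod fs = (\<lambda>U. \<Sum>\<sigma>\<in>PiE {..<length fs} (\<lambda>i. {S. (fs ! i) S \<noteq> 0}).
                       (\<Prod>i<length fs. (fs ! i) (\<sigma> i)) * ind (graft (map \<sigma> [0..<length fs])) U)"
    (is "_ = (\<lambda>U. \<Sum>\<sigma>\<in>PiE {..<?m} ?A. ?c \<sigma> * _)")
proof
  fix U
  have A: "finite (?A i)" if "i < ?m" for i using fin that by simp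
  have fs: "map (\<lambda>i U. \<Sum>a\<in>?A i. (fs ! i) a * ind a U) [0..<?m] = fs"
  proof (rule nth_equalityI)
    fix i assume "i < length (map (\<lambda>i U. \<Sum>a\<in>?A i. (fs ! i) a * ind a U) [0..<?m])"
    then show "map (\<lambda>i U. \<Sum>a\<in>?A i. (fs ! i) a * ind a U) [0..<?m] ! i = fs ! i"
      using sum_ind_expansion[OF A, of i "fs ! i"] by simp
  qed simp
  have "mprod fs U = (\<Sum>\<sigma>\<in>PiE {..<?m} ?A. ?c \<sigma> * mprod (map (\<lambda>i. ind (\<sigma> i)) [0..<?m]) U)"
    by (subst fs[symmetric], rule mprod_sum_expand) (rule A)
  also have "\<dots> = (\<Sum>\<sigma>\<in>PiE {..<?m} ?A. ?c \<sigma> * ind (graft (map \<sigma> [0..<?m])) U)"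
  proof (intro sum.cong refl arg_cong2[where f = "(*)"])
    fix \<sigma> assume "\<sigma> \<in> PiE {..<?m} ?A"
    then have "mprod (map ind (map \<sigma> [0..<?m])) = (ind (graft (map \<sigma> [0..<?m])) :: _ \<Rightarrow> 'a)"
      using assms(1) by (intro mprod_map_ind PiE_support_validP)
    then show "mprod (map (\<lambda>i. ind (\<sigma> i)) [0..<?m]) U = (ind (graft (map \<sigma> [0..<?m])) U :: 'a)"
      by (simp add: comp_def)
  qed
  finally show "mprod fs U = (\<Sum>\<sigma>\<in>PiE {..<?m} ?A. ?c \<sigma> * ind (graft (map \<sigma> [0..<?m])) U)" .
qed

section \<open>Truncation and the x-adic topology\<close>

definition eq_upto :: "nat \<Rightarrow> (ptree option \<Rightarrow> 'a) \<Rightarrow> (ptree option \<Rightarrow> 'a) \<Rightarrow> bool" where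
  "eq_upto n f g \<longleftrightarrow> (\<forall>S. degx S \<le> n \<longrightarrow> f S = g S)"

lemma eq_upto_mono: "m \<le> n \<Longrightarrow> eq_upto n f g \<Longrightarrow> eq_upto m f g"
  by (simp add: eq_upto_def)

lemma eq_upto_mprod:
  assumes "length fs = length gs" and "\<And>i. i < length fs \<Longrightarrow> eq_upto n (fs ! i) (gs ! i)"
  shows "eq_upto n (mprod fs) (mprod gs)"
  unfolding eq_upto_def
proof (intro allI impI)
  fix T assume T: "degx T \<le> n"
  show "mprod fs T = mprod gs T"
    unfolding mprod_eq_sum_graft_preimage assms(1)[symmetric]
  proof (intro sum.cong refl prod.cong)
    fix Ss i assume Ss: "Ss \<in> graft_preimage (length fs) T" and i: "i \<in> {..<length fs}"
    then have "degx (Ss ! i) \<le> degx T"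
      using degx_le_degx_graft[of "Ss ! i" Ss] by (auto simp: graft_preimage_def)
    then show "(fs ! i) (Ss ! i) = (gs ! i) (Ss ! i)" using assms(2) i T by (simp add: eq_upto_def)
  qed
qed

definition trunc :: "nat \<Rightarrow> (ptree option \<Rightarrow> 'a::zero) \<Rightarrow> ptree option \<Rightarrow> 'a" where
  "trunc n f S = (if degx S \<le> n then f S else 0)"

lemma eq_upto_trunc: "eq_upto n (trunc n f) f"
  by (simp add: eq_upto_def trunc_def)

lemma trunc_KXY: "f \<in> KXY \<Longrightarrow> trunc n f \<in> KXY"
  by (rule KXY_if_finite_support)
    (auto simp: trunc_def KXY_vanishes intro: rev_finite_subset[OF finite_support_degx_le])

lemma finite_support_trunc: "f \<in> KXY \<Longrightarrow> finite {S. trunc n f S \<noteq> 0}"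
  by (rule rev_finite_subset[OF finite_support_degx_le[of f n]]) (auto simp: trunc_def)

lemma absx_nonzero:
  "w \<noteq> (\<lambda>_. 0) \<Longrightarrow> absx w = (1/2) ^ (LEAST k. \<exists>S. validP S \<and> w S \<noteq> 0 \<and> degx S = k)"
  by (simp add: absx_def ordx_def)

lemma ordx_le_degx: "validP S \<Longrightarrow> f S \<noteq> 0 \<Longrightarrow> ordx f \<le> enat (degx S)"
  by (auto simp: ordx_def intro: Least_le)

lemma eq_upto_if_absx_diff_less:
  assumes "f \<in> KXY" "g \<in> KXY" and less: "absx (\<lambda>S. f S - g S) < (1/2) ^ n"
  shows "eq_upto n f g"
  unfolding eq_upto_def
proof (intro allI impI)
  fix S assume deg: "degx S \<le> n"
  show "f S = g S"
  proof (rule ccontr)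
    assume ne: "f S \<noteq> g S"
    then have "validP S" using assms(1,2) by (rule validP_if_KXY_ne[rotated 2])
    with ne have "(LEAST k. \<exists>S. validP S \<and> f S - g S \<noteq> 0 \<and> degx S = k) \<le> n"
      using deg by (intro le_trans[OF Least_le]) auto
    then have "(1/2) ^ n \<le> absx (\<lambda>S. f S - g S)"
      using ne by (subst absx_nonzero) (auto dest: fun_cong[of _ _ S] intro: power_decreasing)
    with less show False by simp
  qed
qed

lemma absx_diff_le_if_eq_upto:
  assumes "f \<in> KXY" "g \<in> KXY" and eq: "eq_upto n f g"
  shows "absx (\<lambda>S. f S - g S) \<le> (1/2) ^ Suc n"
proof (cases "(\<lambda>S. f S - g S) = (\<lambda>_. 0)")
  case False
  then obtain S0 where "f S0 - g S0 \<noteq> 0" by meson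
  then have "validP S0" using assms(1,2) validP_if_KXY_ne by auto
  let ?P = "\<lambda>k. \<exists>S. validP S \<and> f S - g S \<noteq> 0 \<and> degx S = k"
  have "?P (Least ?P)" using \<open>f S0 - g S0 \<noteq> 0\<close> \<open>validP S0\<close> by (intro LeastI) blast
  then have "n < Least ?P" using eq by (force simp: eq_upto_def)
  then have "(1/2::real) ^ Least ?P \<le> (1/2) ^ Suc n" by (intro power_decreasing) auto
  then show ?thesis by (simp only: absx_nonzero[OF False])
qed (simp add: absx_def)

lemma xadic_continuous_iff_eq_upto:
  fixes \<phi> :: "(ptree option \<Rightarrow> 'a::field) \<Rightarrow> ptree option \<Rightarrow> 'a"
  assumes "\<And>f. f \<in> KXY \<Longrightarrow> \<phi> f \<in> KXY"
  shows "xadic_continuous \<phi> \<longleftrightarrow>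
           (\<forall>f\<in>KXY. \<forall>N. \<exists>n. \<forall>g\<in>KXY. eq_upto n g f \<longrightarrow> eq_upto N (\<phi> g) (\<phi> f))"
proof
  assume cont: "xadic_continuous \<phi>"
  show "\<forall>f\<in>KXY. \<forall>N. \<exists>n. \<forall>g\<in>KXY. eq_upto n g f \<longrightarrow> eq_upto N (\<phi> g) (\<phi> f)"
  proof (intro ballI allI)
    fix f :: "ptree option \<Rightarrow> 'a" and N assume f: "f \<in> KXY"
    have "(0::real) < (1/2) ^ N" by simp
    then obtain d where "d > 0"
      and d: "\<forall>g\<in>KXY. absx (\<lambda>S. g S - f S) < d \<longrightarrow> absx (\<lambda>S. \<phi> g S - \<phi> f S) < (1/2) ^ N"
      using cont f unfolding xadic_continuous_def by blast
    obtain n where n: "(1/2) ^ n < d" using real_arch_pow_inv[OF \<open>d > 0\<close>, of "1/2"] by auto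
    have "eq_upto N (\<phi> g) (\<phi> f)" if "g \<in> KXY" "eq_upto n g f" for g
    proof -
      have "absx (\<lambda>S. g S - f S) \<le> (1/2) ^ Suc n" using absx_diff_le_if_eq_upto that f by blast
      also have "\<dots> \<le> (1/2) ^ n" by (intro power_decreasing) auto
      also have "\<dots> < d" by (rule n)
      finally show ?thesis using d that f assms eq_upto_if_absx_diff_less by blast
    qed
    then show "\<exists>n. \<forall>g\<in>KXY. eq_upto n g f \<longrightarrow> eq_upto N (\<phi> g) (\<phi> f)" by blast
  qed
next
  assume cont: "\<forall>f\<in>KXY. \<forall>N. \<exists>n. \<forall>g\<in>KXY. eq_upto n g f \<longrightarrow> eq_upto N (\<phi> g) (\<phi> f)"
  show "xadic_continuous \<phi>"
    unfolding xadic_continuous_def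
  proof (intro ballI allI impI)
    fix f :: "ptree option \<Rightarrow> 'a" and e :: real assume f: "f \<in> KXY" and "e > 0"
    obtain N where N: "(1/2) ^ N < e" using real_arch_pow_inv[OF \<open>e > 0\<close>, of "1/2"] by auto
    obtain n where n: "\<And>g. g \<in> KXY \<Longrightarrow> eq_upto n g f \<Longrightarrow> eq_upto N (\<phi> g) (\<phi> f)"
      using cont f by blast
    have "absx (\<lambda>S. \<phi> g S - \<phi> f S) < e"
      if "g \<in> KXY" "absx (\<lambda>S. g S - f S) < (1/2) ^ n" for g
    proof -
      have "eq_upto N (\<phi> g) (\<phi> f)" using n that f eq_upto_if_absx_diff_less by blast
      then have "absx (\<lambda>S. \<phi> g S - \<phi> f S) \<le> (1/2) ^ Suc N"
        using absx_diff_le_if_eq_upto assms that f by blast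
      also have "\<dots> \<le> (1/2) ^ N" by (intro power_decreasing) auto
      also have "\<dots> < e" by (rule N)
      finally show ?thesis .
    qed
    then show "\<exists>d>0. \<forall>g\<in>KXY. absx (\<lambda>S. g S - f S) < d \<longrightarrow> absx (\<lambda>S. \<phi> g S - \<phi> f S) < e"
      by (intro exI[of _ "(1/2) ^ n"]) auto
  qed
qed

lemma xadic_continuous_eq_if_eq_on_finite_support:
  assumes "xadic_continuous \<phi>" "xadic_continuous \<psi>"
    and KXY: "\<And>f. f \<in> KXY \<Longrightarrow> \<phi> f \<in> KXY" "\<And>f. f \<in> KXY \<Longrightarrow> \<psi> f \<in> KXY"
    and eq: "\<And>f. f \<in> KXY \<Longrightarrow> finite {S. f S \<noteq> 0} \<Longrightarrow> \<phi> f = \<psi> f"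
    and f: "f \<in> KXY"
  shows "\<phi> f = \<psi> f"
proof
  fix T
  show "\<phi> f T = \<psi> f T"
  proof (cases "validP T")
    case True
    have "\<forall>f\<in>KXY. \<forall>N. \<exists>n. \<forall>g\<in>KXY. eq_upto n g f \<longrightarrow> eq_upto N (\<phi> g) (\<phi> f)"
      using assms(1) xadic_continuous_iff_eq_upto[OF KXY(1)] by simp
    then obtain n1 where n1: "\<And>g. g \<in> KXY \<Longrightarrow> eq_upto n1 g f \<Longrightarrow> eq_upto (degx T) (\<phi> g) (\<phi> f)"
      using f by blast
    have "\<forall>f\<in>KXY. \<forall>N. \<exists>n. \<forall>g\<in>KXY. eq_upto n g f \<longrightarrow> eq_upto N (\<psi> g) (\<psi> f)"
      using assms(2) xadic_continuous_iff_eq_upto[OF KXY(2)] by simp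
    then obtain n2 where n2: "\<And>g. g \<in> KXY \<Longrightarrow> eq_upto n2 g f \<Longrightarrow> eq_upto (degx T) (\<psi> g) (\<psi> f)"
      using f by blast
    define g where "g = trunc (max n1 n2) f"
    have g: "g \<in> KXY" "eq_upto n1 g f" "eq_upto n2 g f"
      unfolding g_def using f trunc_KXY eq_upto_trunc eq_upto_mono max.cobounded1 max.cobounded2 by blast+
    have "\<phi> f T = \<phi> g T" using n1[OF g(1,2)] by (simp add: eq_upto_def)
    also have "\<dots> = \<psi> g T" using eq[OF trunc_KXY[OF f] finite_support_trunc[OF f]] by (simp add: g_def)
    also have "\<dots> = \<psi> f T" using n2[OF g(1,3)] by (simp add: eq_upto_def)
    finally show ?thesis .
  qed (simp add: KXY_vanishes[OF KXY(1)[OF f]] KXY_vanishes[OF KXY(2)[OF f]])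
qed

section \<open>The substitution homomorphism\<close>

locale series_subst =
  fixes g h :: "ptree option \<Rightarrow> 'a::field"
  assumes g_KXY: "g \<in> KXY" and h_KXY: "h \<in> KXY" and ordx_g: "ordx g \<ge> 1"
begin

lemma degx_ge_1_if_g_nonzero:
  assumes "g S \<noteq> 0" shows "1 \<le> degx S"
proof -
  have "validP S" using assms KXY_vanishes[OF g_KXY] by blast
  then have "ordx g \<le> enat (degx S)" using assms by (rule ordx_le_degx)
  then have "1 \<le> enat (degx S)" using ordx_g by (rule order_trans[rotated])
  then show ?thesis by (simp add: one_enat_def)
qed

fun subst_tree :: "ptree \<Rightarrow> ptree option \<Rightarrow> 'a" where
  "subst_tree (Leaf l) = (if l = LX then g else h)"
| "subst_tree (Node ts) = mprod (map subst_tree ts)"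

lemma subst_tree_KXY: "subst_tree t \<in> KXY"
  by (induction t) (auto simp: g_KXY h_KXY intro!: mprod_KXY)

lemma degx_le_if_subst_tree_nonzero: "subst_tree t T \<noteq> 0 \<Longrightarrow> degx_t t \<le> degx T"
proof (induction t arbitrary: T)
  case (Leaf l)
  then show ?case using degx_ge_1_if_g_nonzero by (cases l) auto
next
  case (Node ts)
  then obtain Ss where Ss: "Ss \<in> graft_preimage (length ts) T"
    and nz: "\<And>i. i < length ts \<Longrightarrow> subst_tree (ts ! i) (Ss ! i) \<noteq> 0"
    using mprod_nonzero_imp[of "map subst_tree ts" T] by auto
  have len: "length Ss = length ts" and T: "T = graft Ss" using Ss by (auto simp: graft_preimage_def)
  have "degx_t (Node ts) = (\<Sum>i<length ts. degx_t (ts ! i))"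
    by (simp add: sum_list_sum_nth atLeast0LessThan)
  also have "\<dots> \<le> (\<Sum>i<length ts. degx (Ss ! i))"
    using Node.IH nz by (intro sum_mono) auto
  also have "\<dots> = degx T"
    using len by (simp add: T degx_graft sum_list_sum_nth atLeast0LessThan)
  finally show ?case .
qed

definition subst_basis :: "ptree option \<Rightarrow> ptree option \<Rightarrow> 'a" where
  "subst_basis S = (case S of None \<Rightarrow> oneP | Some t \<Rightarrow> subst_tree t)"

lemma subst_basis_simps [simp]:
  "subst_basis None = oneP" "subst_basis (Some t) = subst_tree t"
  by (simp_all add: subst_basis_def)

lemma subst_basis_KXY: "subst_basis S \<in> KXY"
  by (cases S) (simp_all add: oneP_KXY subst_tree_KXY)

lemma degx_le_if_subst_basis_nonzero: "subst_basis S T \<noteq> 0 \<Longrightarrow> degx S \<le> degx T"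
  by (cases S) (auto simp: degx_le_if_subst_tree_nonzero)

lemma mprod_append_map_subst_basis:
  "mprod (fs @ map subst_basis Ss) = mprod (fs @ map subst_tree (List.map_filter id Ss))"
proof (induction Ss arbitrary: fs)
  case (Cons S Ss)
  then show ?case
    using mprod_append_oneP_Cons[of fs "map subst_basis Ss"]
    by (cases S) (simp_all, metis append.assoc append_Cons append_Nil)
qed simp

lemma subst_basis_graft: "subst_basis (graft Ss) = mprod (map subst_basis Ss)"
proof -
  have "mprod (map subst_basis Ss) = mprod (map subst_tree (List.map_filter id Ss))"
    using mprod_append_map_subst_basis[of "[]"] by simp
  moreover have "mprod [subst_tree t] = subst_tree t" for t
    using KXY_vanishes[OF subst_tree_KXY] by (rule mprod_singleton)
  ultimately show ?thesis
    unfolding graft_map_filter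
    by (cases "List.map_filter id Ss" rule: remdups_adj.cases) (simp_all add: mprod_Nil)
qed

text \<open>Only \<^term>\<open>S\<close> with \<^term>\<open>degx S \<le> degx T\<close> can contribute to the coefficient at \<^term>\<open>T\<close>
  (by \<open>degx_le_if_subst_basis_nonzero\<close>, which is where \<^term>\<open>ordx g \<ge> 1\<close> enters); restricting
  to them makes the sum finite for series.\<close>

definition subst_map :: "(ptree option \<Rightarrow> 'a) \<Rightarrow> ptree option \<Rightarrow> 'a" where
  "subst_map f T = (\<Sum>S | f S \<noteq> 0 \<and> degx S \<le> degx T. f S * subst_basis S T)"

lemma subst_map_eq_sum:
  assumes "finite B" "{S. f S \<noteq> 0 \<and> degx S \<le> degx T} \<subseteq> B"
  shows "subst_map f T = (\<Sum>S\<in>B. f S * subst_basis S T)"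
  unfolding subst_map_def
  using assms degx_le_if_subst_basis_nonzero by (intro sum.mono_neutral_left) force+

lemma subst_map_finite_support:
  "finite {S. f S \<noteq> 0} \<Longrightarrow> subst_map f = (\<lambda>T. \<Sum>S | f S \<noteq> 0. f S * subst_basis S T)"
  by (auto intro: subst_map_eq_sum)

lemma subst_map_ind: "subst_map (ind S) = subst_basis S"
proof -
  have "{U. ind S U \<noteq> 0} = {S}" by (auto simp: ind_def)
  then show ?thesis by (simp add: subst_map_finite_support ind_def)
qed

lemma eq_upto_subst_map:
  assumes "eq_upto n u f" shows "eq_upto n (subst_map u) (subst_map f)"
  unfolding eq_upto_def
proof (intro allI impI)
  fix T assume "degx T \<le> n"
  then have "\<And>S. degx S \<le> degx T \<Longrightarrow> u S = f S" using assms by (simp add: eq_upto_def)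
  then show "subst_map u T = subst_map f T"
    unfolding subst_map_def by (intro sum.cong) auto
qed

lemma subst_map_KXY:
  assumes f: "f \<in> KXY" shows "subst_map f \<in> KXY"
  unfolding KXY_def
proof (intro CollectI conjI allI impI)
  show "subst_map f T = 0" if "\<not> validP T" for T
    using that KXY_vanishes[OF subst_basis_KXY] by (simp add: subst_map_def)
  fix n
  let ?U = "\<Union>S\<in>{S. f S \<noteq> 0 \<and> degx S \<le> n}. {T. validP T \<and> subst_basis S T \<noteq> 0 \<and> degx T = n}"
  have "{T. validP T \<and> subst_map f T \<noteq> 0 \<and> degx T = n} \<subseteq> ?U"
    by (auto simp: subst_map_def elim!: sum.not_neutral_contains_not_neutral)
  moreover have "finite ?U"
    using finite_support_degx_le[OF f] subst_basis_KXY by (auto simp: KXY_def)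
  ultimately show "finite {T. validP T \<and> subst_map f T \<noteq> 0 \<and> degx T = n}"
    by (rule finite_subset)
qed

lemma KXY_linear_subst_map: "KXY_linear subst_map"
  unfolding KXY_linear_def
proof (intro ballI allI ext)
  fix f k :: "ptree option \<Rightarrow> 'a" and a b T assume f: "f \<in> KXY" and k: "k \<in> KXY"
  let ?B = "{S. f S \<noteq> 0 \<and> degx S \<le> degx T} \<union> {S. k S \<noteq> 0 \<and> degx S \<le> degx T}"
  have B: "finite ?B" using finite_support_degx_le f k by blast
  have "subst_map (\<lambda>S. a * f S + b * k S) T = (\<Sum>S\<in>?B. (a * f S + b * k S) * subst_basis S T)"
    using B by (rule subst_map_eq_sum) auto
  also have "\<dots> = a * (\<Sum>S\<in>?B. f S * subst_basis S T) + b * (\<Sum>S\<in>?B. k S * subst_basis S T)"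
    by (simp add: sum.distrib sum_distrib_left algebra_simps)
  also have "\<dots> = a * subst_map f T + b * subst_map k T"
    using subst_map_eq_sum[OF B] by auto
  finally show "subst_map (\<lambda>S. a * f S + b * k S) T = a * subst_map f T + b * subst_map k T" .
qed

lemma subst_map_mprod_finite_support:
  assumes "set fs \<subseteq> KXY" and fin: "\<forall>f\<in>set fs. finite {S. f S \<noteq> 0}"
  shows "subst_map (mprod fs) = mprod (map subst_map fs)"
proof -
  let ?m = "length fs" and ?A = "\<lambda>i. {S. (fs ! i) S \<noteq> 0}"
  have A: "finite (?A i)" if "i < ?m" for i using fin that by simp
  have "subst_map (mprod fs) = (\<lambda>T. \<Sum>\<sigma>\<in>PiE {..<?m} ?A.
          (\<Prod>i<?m. (fs ! i) (\<sigma> i)) * subst_map (ind (graft (map \<sigma> [0..<?m]))) T)"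
    unfolding mprod_expand_finite_support[OF assms]
    by (rule KXY_linear_sum_ind[OF KXY_linear_subst_map,
          where c = "\<lambda>\<sigma>. \<Prod>i<length fs. (fs ! i) (\<sigma> i)"
            and s = "\<lambda>\<sigma>. graft (map \<sigma> [0..<length fs])"])
      (use A PiE_support_validP[OF assms(1)] in \<open>auto intro!: finite_PiE validP_graft\<close>)
  also have "\<dots> = (\<lambda>T. \<Sum>\<sigma>\<in>PiE {..<?m} ?A.
          (\<Prod>i<?m. (fs ! i) (\<sigma> i)) * mprod (map (\<lambda>i. subst_basis (\<sigma> i)) [0..<?m]) T)"
    by (simp add: subst_map_ind subst_basis_graft comp_def)
  also have "\<dots> = mprod (map (\<lambda>i U. \<Sum>a\<in>?A i. (fs ! i) a * subst_basis a U) [0..<?m])"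
    by (rule ext, rule mprod_sum_expand[symmetric]) (rule A)
  also have "map (\<lambda>i U. \<Sum>a\<in>?A i. (fs ! i) a * subst_basis a U) [0..<?m] = map subst_map fs"
  proof (rule nth_equalityI)
    fix i assume "i < length (map (\<lambda>i U. \<Sum>a\<in>?A i. (fs ! i) a * subst_basis a U) [0..<?m])"
    then show "map (\<lambda>i U. \<Sum>a\<in>?A i. (fs ! i) a * subst_basis a U) [0..<?m] ! i = map subst_map fs ! i"
      using subst_map_finite_support[of "fs ! i"] A[of i] by simp
  qed simp
  finally show ?thesis .
qed

lemma subst_map_mprod:
  assumes fs: "set fs \<subseteq> KXY" shows "subst_map (mprod fs) = mprod (map subst_map fs)"
proof
  fix T
  define fs' where "fs' = map (trunc (degx T)) fs"
  have "eq_upto (degx T) (mprod fs') (mprod fs)"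
    by (rule eq_upto_mprod) (simp_all add: fs'_def eq_upto_trunc)
  then have "eq_upto (degx T) (subst_map (mprod fs')) (subst_map (mprod fs))"
    by (rule eq_upto_subst_map)
  then have "subst_map (mprod fs) T = subst_map (mprod fs') T"
    by (simp add: eq_upto_def)
  also have "\<dots> = mprod (map subst_map fs') T"
    by (rule subst_map_mprod_finite_support[THEN fun_cong])
      (use fs in \<open>auto simp: fs'_def trunc_KXY finite_support_trunc\<close>)
  also have "\<dots> = mprod (map subst_map fs) T"
  proof -
    have "eq_upto (degx T) (mprod (map subst_map fs')) (mprod (map subst_map fs))"
      by (rule eq_upto_mprod) (simp_all add: fs'_def eq_upto_subst_map eq_upto_trunc)
    then show ?thesis by (simp add: eq_upto_def)
  qed
  finally show "subst_map (mprod fs) T = mprod (map subst_map fs) T" .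
qed

lemma xadic_continuous_subst_map: "xadic_continuous subst_map"
  using subst_map_KXY eq_upto_subst_map by (subst xadic_continuous_iff_eq_upto) blast+

lemma alg_hom_subst_map: "alg_hom subst_map"
  using subst_map_KXY KXY_linear_subst_map subst_map_ind[of None] subst_map_mprod
  by (simp add: alg_hom_def KXY_linear_def oneP_def)

lemma subst_map_varx: "subst_map varx = g" and subst_map_vary: "subst_map vary = h"
  by (simp_all add: varx_def vary_def subst_map_ind)

lemma alg_hom_ind_Some:
  assumes "alg_hom \<psi>" "\<psi> varx = g" "\<psi> vary = h" and "reduced t"
  shows "\<psi> (ind (Some t)) = subst_tree t"
  using assms(4)
proof (induction t)
  case (Leaf l)
  then show ?case using assms(2,3) by (cases l) (simp_all add: varx_def vary_def)
next
  case (Node ts)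
  then have len: "2 \<le> length ts" and red: "\<forall>t\<in>set ts. reduced t" by auto
  have "List.map_filter id (map Some ts) = ts" by (induction ts) simp_all
  then have graft: "graft (map Some ts) = Some (Node ts)"
    using len by (cases ts rule: remdups_adj.cases) (simp_all add: graft_map_filter)
  have "ind (Some (Node ts)) = mprod (map ind (map Some ts))"
    unfolding graft[symmetric] using red by (intro mprod_map_ind[symmetric]) (auto simp: validP_def)
  then have "\<psi> (ind (Some (Node ts))) = \<psi> (mprod (map ind (map Some ts)))" by (rule arg_cong)
  also have "\<dots> = mprod (map \<psi> (map ind (map Some ts)))"
  proof -
    have "\<forall>fs. 2 \<le> length fs \<longrightarrow> set fs \<subseteq> KXY \<longrightarrow> \<psi> (mprod fs) = mprod (map \<psi> fs)"
      using assms(1) by (simp add: alg_hom_def)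
    moreover have "set (map ind (map Some ts)) \<subseteq> KXY" using red by (auto intro: ind_KXY simp: validP_def)
    ultimately show ?thesis using len by (metis length_map)
  qed
  also have "map \<psi> (map ind (map Some ts)) = map subst_tree ts"
    using Node.IH red by simp
  finally show ?case by simp
qed

lemma alg_hom_ind:
  assumes "alg_hom \<psi>" "\<psi> varx = g" "\<psi> vary = h" and "validP S"
  shows "\<psi> (ind S) = subst_basis S"
  using assms alg_hom_ind_Some by (cases S) (auto simp: alg_hom_def oneP_def validP_def)

lemma alg_hom_eq_subst_map:
  assumes \<psi>: "alg_hom \<psi>" "\<psi> varx = g" "\<psi> vary = h" and "xadic_continuous \<psi>"
    and f: "f \<in> KXY"
  shows "\<psi> f = subst_map f"
proof (rule xadic_continuous_eq_if_eq_on_finite_support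
    [OF assms(4) xadic_continuous_subst_map _ subst_map_KXY _ f])
  show "\<psi> u \<in> KXY" if "u \<in> KXY" for u :: "ptree option \<Rightarrow> 'a"
    using \<psi>(1) that by (simp add: alg_hom_def)
  fix u :: "ptree option \<Rightarrow> 'a" assume u: "u \<in> KXY" and fin: "finite {S. u S \<noteq> 0}"
  have valid: "\<forall>S\<in>{S. u S \<noteq> 0}. validP S" using u KXY_vanishes by blast
  have "\<psi> u = \<psi> (\<lambda>U. \<Sum>S | u S \<noteq> 0. u S * ind S U)"
    using fin by (simp add: sum_ind_expansion)
  also have "\<dots> = (\<lambda>T. \<Sum>S | u S \<noteq> 0. u S * subst_basis S T)"
    using KXY_linear_sum_ind[OF KXY_linear_if_alg_hom[OF \<psi>(1)] fin, of id] valid alg_hom_ind[OF \<psi>]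
    by simp
  also have "\<dots> = subst_map u" using fin by (simp add: subst_map_finite_support)
  finally show "\<psi> u = subst_map u" .
qed

end

theorem proposition3p1:
  fixes g h :: "ptree option \<Rightarrow> 'a::field"
  assumes "g \<in> KXY" and "h \<in> KXY" and "ordx g \<ge> 1"
  shows "\<exists>\<phi>. alg_hom \<phi> \<and> \<phi> varx = g \<and> \<phi> vary = h \<and> xadic_continuous \<phi> \<and>
           (\<forall>\<psi>. alg_hom \<psi> \<and> \<psi> varx = g \<and> \<psi> vary = h \<and> xadic_continuous \<psi>
                  \<longrightarrow> (\<forall>f\<in>KXY. \<psi> f = \<phi> f))"
proof -
  interpret series_subst g h using assms by unfold_locales
  show ?thesis
    using alg_hom_subst_map subst_map_varx subst_map_vary xadic_continuous_subst_map
      alg_hom_eq_subst_map by blast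
qed

end
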